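(* Let $X$ be a compact metric space and $f:X\to X$ a local homeomorphism. Suppose there is a full zip shift map $\sigma_\tau:\Sigma\to\Sigma$ and a homeomorphism $\phi:X\to\Sigma$ with $f=\phi^{-1}\circ\sigma_\tau\circ\phi$. Then $f$ is expansive.
   Context: Given finite nonempty alphabets $S,Z$ with $\#Z\le\#S$ and a surjection $\tau:S\to Z$, the zip shift space $\Sigma=\Sigma_{Z,S}$ is the set of bi-infinite sequences $x=(x_i)_{i\in\mathbb{Z}}$ with $x_i\in S$ for $i\ge0$ and $x_i\in Z$ for $i<0$, with metric $d(x,y)=2^{-M(x,y)}$, $M(x,y)=\min\{|i|:x_i\neq y_i\}$; the zip shift map is $(\sigma_\tau x)_i=x_{i+1}$ for $i\neq-1$, $(\sigma_\tau x)_{-1}=\tau(x_0)$. A local homeomorphism $f:X\to X$ of a compact metric space $(X,d_X)$ is expansive if there is $e>0$ such that for any $x\neq y$ in $X$ there exists $n\in\mathbb{Z}$ with $d_X(f^n(x),f^n(y))>e$, where for $n<0$, $f^n(x)$, $f^n(y)$ denote the sets of $|n|$-th preimages and the distance is the minimum distance between these sets. *)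

theory Defs
  imports "HOL-Analysis.Analysis"
begin

definition zip_space :: "'a set \<Rightarrow> 'a set \<Rightarrow> (int \<Rightarrow> 'a) set" where
  "zip_space Z S = {x. (\<forall>i\<ge>0. x i \<in> S) \<and> (\<forall>i<0. x i \<in> Z)}"

definition zip_shift :: "('a \<Rightarrow> 'a) \<Rightarrow> (int \<Rightarrow> 'a) \<Rightarrow> (int \<Rightarrow> 'a)" where
  "zip_shift \<tau> x = (\<lambda>i. if i = -1 then \<tau> (x 0) else x (i + 1))"

definition zip_M :: "(int \<Rightarrow> 'a) \<Rightarrow> (int \<Rightarrow> 'a) \<Rightarrow> nat" where
  "zip_M x y = (LEAST m. \<exists>i. nat \<bar>i\<bar> = m \<and> x i \<noteq> y i)"

definition zip_dist :: "(int \<Rightarrow> 'a) \<Rightarrow> (int \<Rightarrow> 'a) \<Rightarrow> real" where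
  "zip_dist x y = (if x = y then 0 else (1/2) ^ zip_M x y)"

definition zip_topology :: "'a set \<Rightarrow> 'a set \<Rightarrow> (int \<Rightarrow> 'a) topology" where
  "zip_topology Z S = Metric_space.mtopology (zip_space Z S) zip_dist"

definition local_homeo_on :: "'b::metric_space set \<Rightarrow> ('b \<Rightarrow> 'b) \<Rightarrow> bool" where
  "local_homeo_on X f \<longleftrightarrow> f ` X \<subseteq> X \<and>
     (\<forall>x\<in>X. \<exists>U g. x \<in> U \<and> openin (top_of_set X) U \<and> openin (top_of_set X) (f ` U)
                 \<and> homeomorphism U (f ` U) f g)"

definition expansive_on :: "'b::metric_space set \<Rightarrow> ('b \<Rightarrow> 'b) \<Rightarrow> bool" where
  "expansive_on X f \<longleftrightarrow> (\<exists>e>0. \<forall>x\<in>X. \<forall>y\<in>X. x \<noteq> y \<longrightarrow>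
     (\<exists>n::int. (if n \<ge> 0 then dist ((f ^^ nat n) x) ((f ^^ nat n) y)
                else setdist {z\<in>X. (f ^^ nat (-n)) z = x} {z\<in>X. (f ^^ nat (-n)) z = y}) > e))"

end

(*
  The zeroth coordinate of \<phi> is locally constant on X, so by compactness (a Lebesgue
  number argument) points of X with different zeroth coordinates are at least some e > 0
  apart. If \<phi> x and \<phi> y differ at a coordinate i \<ge> 0, then the zeroth coordinates of
  f^i x and f^i y differ. If they differ at some i < 0, then every |i|-th preimage z of x
  satisfies \<tau> (\<phi> z 0) = \<phi> x i, and likewise for y, so all |i|-th preimages of x have
  zeroth coordinates different from those of y, and the two preimage sets are e apart;
  they are nonempty because the zip shift is onto.
*)

theory Submission
  imports Defs
begin

lemma zip_M_le: "x i \<noteq> y i \<Longrightarrow> zip_M x y \<le> nat \<bar>i\<bar>"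
  unfolding zip_M_def by (rule Least_le) blast

lemma zip_M_witness: "x \<noteq> y \<Longrightarrow> \<exists>i. nat \<bar>i\<bar> = zip_M x y \<and> x i \<noteq> y i"
  unfolding zip_M_def by (rule LeastI_ex) (auto simp: fun_eq_iff)

lemma zip_M_commute: "zip_M x y = zip_M y x"
  unfolding zip_M_def by metis

lemma zip_dist_nonneg: "0 \<le> zip_dist x y"
  by (simp add: zip_dist_def)

lemma zip_dist_ge_coordinate: "x i \<noteq> y i \<Longrightarrow> (1/2) ^ nat \<bar>i\<bar> \<le> zip_dist x y"
  using zip_M_le[of x i y] by (auto simp: zip_dist_def intro: power_decreasing)

lemma zip_coordinate_eq_if_dist_less: "zip_dist x y < (1/2) ^ nat \<bar>i\<bar> \<Longrightarrow> x i = y i"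
  using zip_dist_ge_coordinate by fastforce

lemma zip_dist_ultrametric: "zip_dist x z \<le> max (zip_dist x y) (zip_dist y z)"
proof (cases "x = z")
  case True
  then show ?thesis by (simp add: zip_dist_def le_max_iff_disj zip_dist_nonneg)
next
  case False
  then obtain i where i: "nat \<bar>i\<bar> = zip_M x z" "x i \<noteq> z i"
    using zip_M_witness by blast
  then have "zip_dist x z = (1/2) ^ nat \<bar>i\<bar>"
    using False by (simp add: zip_dist_def)
  moreover have "x i \<noteq> y i \<or> y i \<noteq> z i"
    using i(2) by auto
  ultimately show ?thesis
    using zip_dist_ge_coordinate[of x i y] zip_dist_ge_coordinate[of y i z]
    by (auto simp: le_max_iff_disj)
qed

lemma Metric_space_zip_dist: "Metric_space M zip_dist"
proof
  fix x y z :: "int \<Rightarrow> 'a"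
  show "0 \<le> zip_dist x y"
    by (rule zip_dist_nonneg)
  show "zip_dist x y = 0 \<longleftrightarrow> x = y"
    by (simp add: zip_dist_def)
  show "zip_dist x y = zip_dist y x"
    unfolding zip_dist_def using zip_M_commute[of x y] by simp
  show "zip_dist x z \<le> zip_dist x y + zip_dist y z"
    using zip_dist_ultrametric[of x z y] zip_dist_nonneg[of x y] zip_dist_nonneg[of y z]
    by linarith
qed

lemma topspace_zip_topology [simp]: "topspace (zip_topology Z S) = zip_space Z S"
proof -
  interpret Metric_space "zip_space Z S" zip_dist
    by (rule Metric_space_zip_dist)
  show ?thesis
    by (simp add: zip_topology_def)
qed

lemma openin_zip_cylinder: "openin (zip_topology Z S) {w \<in> zip_space Z S. w i = s}"
proof -
  interpret Metric_space "zip_space Z S" zip_dist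
    by (rule Metric_space_zip_dist)
  show ?thesis
    unfolding zip_topology_def openin_mtopology
  proof (intro conjI allI impI)
    fix w assume "w \<in> {w \<in> zip_space Z S. w i = s}"
    then have "mball w ((1/2) ^ nat \<bar>i\<bar>) \<subseteq> {w \<in> zip_space Z S. w i = s}"
      using zip_coordinate_eq_if_dist_less by fastforce
    moreover have "(0::real) < (1/2) ^ nat \<bar>i\<bar>"
      by simp
    ultimately show "\<exists>r>0. mball w r \<subseteq> {w \<in> zip_space Z S. w i = s}"
      by blast
  qed blast
qed

lemma funpow_zip_shift:
  "(zip_shift \<tau> ^^ n) w j =
     (if 0 \<le> j \<or> j + int n < 0 then w (j + int n) else \<tau> (w (j + int n)))"
proof (induction n arbitrary: w)
  case 0
  then show ?case by auto
next
  case (Suc n)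
  have "(zip_shift \<tau> ^^ Suc n) w j = (zip_shift \<tau> ^^ n) (zip_shift \<tau> w) j"
    by (simp only: funpow_Suc_right o_apply)
  also have "\<dots> = (if 0 \<le> j \<or> j + int n < 0 then zip_shift \<tau> w (j + int n)
                     else \<tau> (zip_shift \<tau> w (j + int n)))"
    by (rule Suc.IH)
  also have "\<dots> = (if 0 \<le> j \<or> j + int (Suc n) < 0 then w (j + int (Suc n))
                     else \<tau> (w (j + int (Suc n))))"
    by (cases "j + int n = -1") (auto simp: zip_shift_def algebra_simps)
  finally show ?case .
qed

lemma zip_shift_image:
  assumes "\<tau> ` S = Z"
  shows "zip_shift \<tau> ` zip_space Z S = zip_space Z S"
proof
  show "zip_shift \<tau> ` zip_space Z S \<subseteq> zip_space Z S"
    using assms by (auto simp: zip_space_def zip_shift_def)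
  show "zip_space Z S \<subseteq> zip_shift \<tau> ` zip_space Z S"
  proof
    fix w assume w: "w \<in> zip_space Z S"
    then obtain s where s: "s \<in> S" "w (-1) = \<tau> s"
      using assms by (force simp: zip_space_def)
    define v where "v i = (if i = 0 then s else w (i - 1))" for i
    have "v \<in> zip_space Z S"
      using w s by (auto simp: zip_space_def v_def)
    moreover have "zip_shift \<tau> v = w"
      using s by (auto simp: v_def zip_shift_def)
    ultimately show "w \<in> zip_shift \<tau> ` zip_space Z S"
      by blast
  qed
qed

lemma zip_coordinate_locally_constant:
  assumes "continuous_map (top_of_set X) (zip_topology Z S) \<phi>" and "a \<in> X"
  shows "\<exists>r>0. \<forall>b\<in>X. dist b a < r \<longrightarrow> \<phi> b i = \<phi> a i"
proof -
  let ?P = "{b \<in> X. \<phi> b \<in> {w \<in> zip_space Z S. w i = \<phi> a i}}"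
  have "openin (top_of_set X) ?P"
    using openin_continuous_map_preimage[OF assms(1) openin_zip_cylinder] by simp
  moreover have "a \<in> ?P"
    using continuous_map_image_subset_topspace[OF assms(1)] assms(2) by auto
  ultimately obtain r where "r > 0" "\<forall>b\<in>X. dist b a < r \<longrightarrow> b \<in> ?P"
    unfolding openin_euclidean_subtopology_iff by meson
  then show ?thesis
    by auto
qed

lemma compact_locally_constant_separated:
  fixes X :: "'b::metric_space set"
  assumes "compact X" and "\<forall>a\<in>X. \<exists>r>0. \<forall>b\<in>X. dist b a < r \<longrightarrow> g b = g a"
  obtains e where "e > 0" and "\<And>a b. a \<in> X \<Longrightarrow> b \<in> X \<Longrightarrow> g a \<noteq> g b \<Longrightarrow> e \<le> dist a b"
proof -
  define \<G> where "\<G> = {U. open U \<and> (\<forall>b\<in>U \<inter> X. \<forall>c\<in>U \<inter> X. g b = g c)}"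
  have "X \<subseteq> \<Union>\<G>"
  proof
    fix a assume "a \<in> X"
    then obtain r where "r > 0" "\<forall>b\<in>X. dist b a < r \<longrightarrow> g b = g a"
      using assms(2) by blast
    then have "ball a r \<in> \<G>"
      by (auto simp: \<G>_def dist_commute)
    with \<open>r > 0\<close> show "a \<in> \<Union>\<G>"
      by (meson UnionI centre_in_ball)
  qed
  moreover have "\<And>U. U \<in> \<G> \<Longrightarrow> open U"
    by (simp add: \<G>_def)
  ultimately obtain e where "e > 0" and e: "\<And>x. x \<in> X \<Longrightarrow> \<exists>U\<in>\<G>. ball x e \<subseteq> U"
    by (metis Heine_Borel_lemma[OF assms(1)])
  moreover have "e \<le> dist a b" if "a \<in> X" "b \<in> X" "g a \<noteq> g b" for a b
  proof (rule ccontr)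
    assume "\<not> e \<le> dist a b"
    obtain U where "U \<in> \<G>" "ball a e \<subseteq> U"
      using e \<open>a \<in> X\<close> by blast
    moreover have "a \<in> ball a e" "b \<in> ball a e"
      using \<open>e > 0\<close> \<open>\<not> e \<le> dist a b\<close> by auto
    ultimately have "a \<in> U" "b \<in> U"
      by auto
    with \<open>U \<in> \<G>\<close> that show False
      unfolding \<G>_def by blast
  qed
  ultimately show thesis
    using that by blast
qed

lemma expansive_onI:
  assumes "e > 0"
    and "\<And>x y. x \<in> X \<Longrightarrow> y \<in> X \<Longrightarrow> x \<noteq> y \<Longrightarrow>
           (\<exists>n. e \<le> dist ((f ^^ n) x) ((f ^^ n) y)) \<or>
           (\<exists>k. e \<le> setdist {z \<in> X. (f ^^ k) z = x} {z \<in> X. (f ^^ k) z = y})"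
  shows "expansive_on X f"
  unfolding expansive_on_def
proof (intro exI[of _ "e/2"] conjI ballI impI)
  show "e/2 > 0"
    using assms(1) by simp
  fix x y assume "x \<in> X" "y \<in> X" "x \<noteq> y"
  then consider n where "e \<le> dist ((f ^^ n) x) ((f ^^ n) y)"
    | k where "e \<le> setdist {z \<in> X. (f ^^ k) z = x} {z \<in> X. (f ^^ k) z = y}"
    using assms(2) by blast
  then show "\<exists>n::int. (if n \<ge> 0 then dist ((f ^^ nat n) x) ((f ^^ nat n) y)
      else setdist {z\<in>X. (f ^^ nat (-n)) z = x} {z\<in>X. (f ^^ nat (-n)) z = y}) > e/2"
  proof cases
    case (1 n)
    then show ?thesis
      using assms(1) by (intro exI[of _ "int n"]) simp
  next
    case (2 k)
    then show ?thesis
    proof (cases "k = 0")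
      case True
      have "{z \<in> X. (f ^^ 0) z = x} = {x}" "{z \<in> X. (f ^^ 0) z = y} = {y}"
        using \<open>x \<in> X\<close> \<open>y \<in> X\<close> by auto
      with 2 True show ?thesis
        using assms(1) by (intro exI[of _ 0]) simp
    next
      case False
      with 2 show ?thesis
        using assms(1) by (intro exI[of _ "- int k"]) simp
    qed
  qed
qed

locale zip_conjugacy =
  fixes X :: "'b::metric_space set" and \<phi> :: "'b \<Rightarrow> int \<Rightarrow> 'a" and f :: "'b \<Rightarrow> 'b"
    and \<tau> :: "'a \<Rightarrow> 'a" and S Z :: "'a set"
  assumes inj_\<phi>: "inj_on \<phi> X"
    and \<phi>_image: "\<phi> ` X = zip_space Z S"
    and \<tau>_image: "\<tau> ` S = Z"
    and f_conj: "\<forall>x\<in>X. f x = inv_into X \<phi> (zip_shift \<tau> (\<phi> x))"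
begin

lemma \<phi>_funpow: "x \<in> X \<Longrightarrow> (f ^^ n) x \<in> X \<and> \<phi> ((f ^^ n) x) = (zip_shift \<tau> ^^ n) (\<phi> x)"
proof (induction n)
  case 0
  then show ?case by simp
next
  case (Suc n)
  have "zip_shift \<tau> (\<phi> ((f ^^ n) x)) \<in> \<phi> ` X"
    using Suc zip_shift_image[OF \<tau>_image] \<phi>_image by blast
  then show ?case
    using Suc f_conj by (simp add: inv_into_into f_inv_into_f)
qed

lemma f_image: "f ` X = X"
proof -
  have "f ` X = inv_into X \<phi> ` zip_shift \<tau> ` \<phi> ` X"
    using f_conj by (auto simp: image_image)
  also have "\<dots> = inv_into X \<phi> ` \<phi> ` X"
    by (simp add: \<phi>_image zip_shift_image[OF \<tau>_image])
  also have "\<dots> = X"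
    by (simp add: inv_into_image_cancel inj_\<phi>)
  finally show ?thesis .
qed

lemma funpow_image: "(f ^^ k) ` X = X"
proof (induction k)
  case (Suc k)
  have "(f ^^ Suc k) ` X = f ` (f ^^ k) ` X"
    by (simp add: image_comp)
  then show ?case
    by (simp add: Suc f_image)
qed simp

lemma coordinate_funpow: "x \<in> X \<Longrightarrow> \<phi> ((f ^^ n) x) 0 = \<phi> x (int n)"
  using \<phi>_funpow by (simp add: funpow_zip_shift)

lemma coordinate_funpow_negative: "z \<in> X \<Longrightarrow> 0 < k \<Longrightarrow> \<phi> ((f ^^ k) z) (- int k) = \<tau> (\<phi> z 0)"
  using \<phi>_funpow by (simp add: funpow_zip_shift)

lemma orbits_separate:
  assumes sep: "\<And>a b. a \<in> X \<Longrightarrow> b \<in> X \<Longrightarrow> \<phi> a 0 \<noteq> \<phi> b 0 \<Longrightarrow> e \<le> dist a b"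
    and "x \<in> X" "y \<in> X" "x \<noteq> y"
  shows "(\<exists>n. e \<le> dist ((f ^^ n) x) ((f ^^ n) y)) \<or>
         (\<exists>k. e \<le> setdist {z \<in> X. (f ^^ k) z = x} {z \<in> X. (f ^^ k) z = y})"
proof -
  have "\<phi> x \<noteq> \<phi> y"
    using inj_\<phi> assms(2-4) by (meson inj_onD)
  then obtain i where i: "\<phi> x i \<noteq> \<phi> y i"
    by (auto simp: fun_eq_iff)
  show ?thesis
  proof (cases "0 \<le> i")
    case True
    then have "\<phi> ((f ^^ nat i) x) 0 \<noteq> \<phi> ((f ^^ nat i) y) 0"
      using i assms(2,3) by (simp add: coordinate_funpow)
    then have "e \<le> dist ((f ^^ nat i) x) ((f ^^ nat i) y)"
      using sep \<phi>_funpow assms(2,3) by blast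
    then show ?thesis
      by blast
  next
    case False
    define k where "k = nat (- i)"
    have "0 < k" and i_eq: "i = - int k"
      using False by (simp_all add: k_def)
    have "e \<le> dist z z'"
      if "z \<in> X" "(f ^^ k) z = x" "z' \<in> X" "(f ^^ k) z' = y" for z z'
    proof -
      have "\<phi> x i = \<tau> (\<phi> z 0)" "\<phi> y i = \<tau> (\<phi> z' 0)"
        using coordinate_funpow_negative[OF that(1) \<open>0 < k\<close>]
          coordinate_funpow_negative[OF that(3) \<open>0 < k\<close>]
        by (simp_all add: i_eq that(2,4))
      with i have "\<phi> z 0 \<noteq> \<phi> z' 0"
        by auto
      then show ?thesis
        using sep that(1,3) by blast
    qed
    moreover have "x \<in> (f ^^ k) ` X" "y \<in> (f ^^ k) ` X"
      using funpow_image assms(2,3) by auto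
    then have "{z \<in> X. (f ^^ k) z = x} \<noteq> {}" "{z \<in> X. (f ^^ k) z = y} \<noteq> {}"
      by auto
    ultimately show ?thesis
      unfolding le_setdist_iff by blast
  qed
qed

end

theorem proposition2:
  fixes X :: "'b::metric_space set" and f :: "'b \<Rightarrow> 'b"
    and S Z :: "'a set" and \<tau> :: "'a \<Rightarrow> 'a" and \<phi> :: "'b \<Rightarrow> (int \<Rightarrow> 'a)"
  assumes "compact X"
    and "local_homeo_on X f"
    and "finite S" "S \<noteq> {}" "finite Z" "Z \<noteq> {}" "card Z \<le> card S"
    and "\<tau> ` S = Z"
    and "homeomorphic_map (top_of_set X) (zip_topology Z S) \<phi>"
    and "\<forall>x\<in>X. f x = inv_into X \<phi> (zip_shift \<tau> (\<phi> x))"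
  shows "expansive_on X f"
proof -
  note \<phi>_homeo = assms(9)
  interpret zip_conjugacy X \<phi> f \<tau> S Z
  proof
    show "inj_on \<phi> X" "\<phi> ` X = zip_space Z S"
      using homeomorphic_imp_injective_map[OF \<phi>_homeo] homeomorphic_imp_surjective_map[OF \<phi>_homeo]
      by simp_all
  qed (use assms(8,10) in auto)
  have locally_constant: "\<forall>a\<in>X. \<exists>r>0. \<forall>b\<in>X. dist b a < r \<longrightarrow> \<phi> b 0 = \<phi> a 0"
    using zip_coordinate_locally_constant[OF homeomorphic_imp_continuous_map[OF \<phi>_homeo]] by blast
  obtain e where "e > 0"
    and sep: "\<And>a b. a \<in> X \<Longrightarrow> b \<in> X \<Longrightarrow> \<phi> a 0 \<noteq> \<phi> b 0 \<Longrightarrow> e \<le> dist a b"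
    using compact_locally_constant_separated[OF assms(1) locally_constant] by blast
  show ?thesis
    by (rule expansive_onI[OF \<open>e > 0\<close> orbits_separate[OF sep]])
qed

end
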